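(* Let $m$ and $d$ be positive integers with $m\ge2$. There exist a positive integer $N=N(m,d)$ and a block $B=(b_1,\ldots,b_N)\in\{0,1\}^N$ such that for any real polynomial $P$ of degree $d$ and any real function $\eta\in\mathcal C^{d+1}([1,N])$ satisfying \[|\eta(t)|\le 1/20\quad\text{and}\quad \eta^{(d+1)}(t)\ne0\qquad\text{for all }t\in[1,N],\] there exists $n\in[1,N]$ such that \[\lfloor P(n)+\eta(n)\rfloor\not\equiv b_n\pmod m.\] *)

theory Defs
  imports "HOL-Analysis.Analysis" "HOL-Number_Theory.Cong"
begin

text \<open>For S = {1..N} this says that D 0 is
  of class C^k on the closed interval, with D j its j-th derivative.\<close>
definition deriv_chain_on :: "nat \<Rightarrow> real set \<Rightarrow> (nat \<Rightarrow> real \<Rightarrow> real) \<Rightarrow> bool" where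
  "deriv_chain_on k S D \<longleftrightarrow>
     (\<forall>j<k. \<forall>t\<in>S. (D j has_real_derivative D (Suc j) t) (at t within S)) \<and>
     continuous_on S (D k)"

end

theory Submission
  imports Defs
begin

text \<open>
  The block is the (complemented) regular paperfolding sequence b, whose values at
  q(4i+1) and q(4i+3) differ for every q \<ge> 1 and every i.
  A uniform polynomial recurrence theorem, proved by a van der Waerden type induction on the
  degree with the pigeonhole principle, yields a dilation q \<le> W, with W depending only on m, d
  and the accuracy, for which all finite differences of j \<mapsto> P(qj)/m at 0 are close to integers.
  By Newton's formula there is then a polynomial R of degree \<le> d with integer values on q\<nat>
  such that P(qj) - P(0) - m R(qj) is small for j \<le> 4d+7.
  If \<lfloor>P(n) + \<eta>(n)\<rfloor> \<equiv> b(n) (mod m) held for all n \<le> N = W(4d+7), then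
  \<Phi> = P - m R - c + \<eta>, for a suitable integer c, would take values in [-1,1) at the points qj,
  with integer parts following b modulo m, so it would change sign between q(4i+1) and q(4i+3)
  for each i \<le> d+1. These d+2 zeros contradict Rolle's theorem, because the (d+1)-st
  derivative of \<Phi> is that of \<eta>, which does not vanish.
\<close>

section \<open>Polynomial sequences and finite differences\<close>

definition fdiff :: "(nat \<Rightarrow> 'a::ab_group_add) \<Rightarrow> nat \<Rightarrow> 'a" where
  "fdiff f n = f (Suc n) - f n"

fun poly_seq :: "nat \<Rightarrow> (nat \<Rightarrow> 'a::ab_group_add) \<Rightarrow> bool" where
  "poly_seq 0 f \<longleftrightarrow> (\<forall>n. f n = f 0)"
| "poly_seq (Suc d) f \<longleftrightarrow> poly_seq d (fdiff f)"

lemma fdiff_funpow_Suc: "(fdiff ^^ Suc i) f = (fdiff ^^ i) (fdiff f)"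
  by (simp only: funpow_Suc_right comp_apply)

lemma fdiff_const [simp]: "fdiff (\<lambda>_. c) = (\<lambda>_. 0)"
  by (rule ext) (simp add: fdiff_def)

lemma fdiff_funpow_zero: "(fdiff ^^ i) (\<lambda>_. 0) = (\<lambda>_. 0)"
  by (induction i) simp_all

lemma fdiff_funpow_const: "(fdiff ^^ Suc i) (\<lambda>_. c) = (\<lambda>_. 0)"
  by (simp only: fdiff_funpow_Suc fdiff_const fdiff_funpow_zero)

lemma poly_seq_const: "poly_seq d (\<lambda>_. c)"
  by (induction d arbitrary: c) simp_all

lemma poly_seq_add: "poly_seq d f \<Longrightarrow> poly_seq d g \<Longrightarrow> poly_seq d (\<lambda>n. f n + g n)"
proof (induction d arbitrary: f g)
  case (Suc d)
  have "fdiff (\<lambda>n. f n + g n) = (\<lambda>n. fdiff f n + fdiff g n)"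
    by (auto simp: fdiff_def)
  with Suc show ?case by simp
qed (simp; metis)

lemma poly_seq_diff: "poly_seq d f \<Longrightarrow> poly_seq d g \<Longrightarrow> poly_seq d (\<lambda>n. f n - g n)"
proof (induction d arbitrary: f g)
  case (Suc d)
  have "fdiff (\<lambda>n. f n - g n) = (\<lambda>n. fdiff f n - fdiff g n)"
    by (auto simp: fdiff_def)
  with Suc show ?case by simp
qed (simp; metis)

lemma poly_seq_mult_left:
  fixes f :: "nat \<Rightarrow> 'a::ring"
  shows "poly_seq d f \<Longrightarrow> poly_seq d (\<lambda>n. c * f n)"
proof (induction d arbitrary: f)
  case (Suc d)
  have "fdiff (\<lambda>n. c * f n) = (\<lambda>n. c * fdiff f n)"
    by (auto simp: fdiff_def algebra_simps)
  with Suc show ?case by simp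
qed (simp; metis)

lemma poly_seq_sum:
  "finite S \<Longrightarrow> (\<And>i. i \<in> S \<Longrightarrow> poly_seq d (F i)) \<Longrightarrow> poly_seq d (\<lambda>n. \<Sum>i\<in>S. F i n)"
  by (induction S rule: finite_induct) (simp_all add: poly_seq_const poly_seq_add)

lemma poly_seq_0_fdiff: "poly_seq 0 f \<Longrightarrow> fdiff f = (\<lambda>_. 0)"
  unfolding poly_seq.simps fun_eq_iff fdiff_def by (metis diff_self)

lemma poly_seq_Suc: "poly_seq d f \<Longrightarrow> poly_seq (Suc d) f"
  by (induction d arbitrary: f) (simp_all add: poly_seq_0_fdiff poly_seq_const)

lemma poly_seq_mono: "d \<le> e \<Longrightarrow> poly_seq d f \<Longrightarrow> poly_seq e f"
  by (induction e rule: dec_induct) (use poly_seq_Suc in blast)+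

lemma poly_seq_shift: "poly_seq d f \<Longrightarrow> poly_seq d (\<lambda>n. f (a + n))"
proof (induction d arbitrary: f)
  case (Suc d)
  have "fdiff (\<lambda>n. f (a + n)) = (\<lambda>n. fdiff f (a + n))"
    by (auto simp: fdiff_def)
  with Suc show ?case by simp
qed (simp; metis)

lemma poly_seq_shift_diff: "poly_seq (Suc d) f \<Longrightarrow> poly_seq d (\<lambda>n. f (n + a) - f n)"
proof (induction a)
  case 0
  then show ?case by (simp add: poly_seq_const)
next
  case (Suc a)
  have "(\<lambda>n. f (n + Suc a) - f n) = (\<lambda>n. fdiff f (a + n) + (f (n + a) - f n))"
    by (auto simp: fdiff_def add.commute)
  moreover have "poly_seq d (\<lambda>n. fdiff f (a + n))"
    using Suc.prems by (simp add: poly_seq_shift)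
  ultimately show ?case
    using Suc by (simp add: poly_seq_add)
qed

lemma poly_seq_power: "poly_seq k (\<lambda>n. of_nat n ^ k :: 'a::comm_ring_1)"
proof (induction k rule: less_induct)
  case (less k)
  show ?case
  proof (cases k)
    case 0
    then show ?thesis by simp
  next
    case (Suc j)
    have "fdiff (\<lambda>n. of_nat n ^ Suc j :: 'a) = (\<lambda>n. \<Sum>i\<le>j. of_nat (Suc j choose i) * of_nat n ^ i)"
    proof
      fix n
      have "(of_nat n + 1 :: 'a) ^ Suc j
          = (\<Sum>i\<le>j. of_nat (Suc j choose i) * of_nat n ^ i) + of_nat n ^ Suc j"
        by (simp only: binomial_ring power_one mult_1_right sum.atMost_Suc binomial_n_n
            of_nat_1 mult_1_left)
      then show "fdiff (\<lambda>n. of_nat n ^ Suc j :: 'a) n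
          = (\<Sum>i\<le>j. of_nat (Suc j choose i) * of_nat n ^ i)"
        unfolding fdiff_def of_nat_Suc add.commute[of "1::'a"] by (metis add_diff_cancel_right')
    qed
    moreover have "poly_seq j (\<lambda>n. \<Sum>i\<le>j. of_nat (Suc j choose i) * (of_nat n ^ i :: 'a))"
      using less.IH Suc by (intro poly_seq_sum poly_seq_mult_left poly_seq_mono[of _ j]) auto
    ultimately show ?thesis
      using Suc by simp
  qed
qed

lemma poly_seq_poly: "degree p \<le> d \<Longrightarrow> poly_seq d (\<lambda>n. poly p (of_nat n :: 'a::comm_ring_1))"
  unfolding poly_altdef
  by (intro poly_seq_sum poly_seq_mult_left poly_seq_mono[OF _ poly_seq_power]) auto

lemma poly_seq_fdiff_param:
  "(\<And>j. poly_seq d (\<lambda>x. H x j)) \<Longrightarrow> poly_seq d (\<lambda>x. (fdiff ^^ i) (H x) k)"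
proof (induction i arbitrary: H k)
  case (Suc i)
  have "poly_seq d (\<lambda>x. (fdiff ^^ i) (fdiff (H x)) k)"
    by (rule Suc.IH) (simp add: fdiff_def Suc.prems poly_seq_diff)
  then show ?case by (simp only: fdiff_funpow_Suc)
qed simp

lemma poly_seq_fdiff_vanish: "poly_seq d f \<Longrightarrow> d < i \<Longrightarrow> (fdiff ^^ i) f n = 0"
proof (induction d arbitrary: f i)
  case 0
  then obtain i' where "i = Suc i'"
    using less_imp_Suc_add by blast
  with 0 show ?case
    by (simp only: fdiff_funpow_Suc poly_seq_0_fdiff fdiff_funpow_zero)
next
  case (Suc d)
  then obtain i' where "i = Suc i'" "d < i'"
    using Suc_less_eq2 by blast
  with Suc show ?case
    by (simp only: fdiff_funpow_Suc poly_seq.simps)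
qed

lemma fdiff_newton:
  fixes f :: "nat \<Rightarrow> 'a::comm_ring_1"
  shows "f j = (\<Sum>i\<le>j. of_nat (j choose i) * (fdiff ^^ i) f 0)"
proof (induction j arbitrary: f)
  case (Suc j)
  define a where "a i = (fdiff ^^ i) f 0" for i
  have "f (Suc j) = f j + fdiff f j"
    by (simp add: fdiff_def)
  also have "\<dots> = (\<Sum>i\<le>j. of_nat (j choose i) * a i) + (\<Sum>i\<le>j. of_nat (j choose i) * a (Suc i))"
    using Suc.IH[of f] Suc.IH[of "fdiff f"] by (simp only: a_def fdiff_funpow_Suc)
  also have "(\<Sum>i\<le>j. of_nat (j choose i) * a i) = a 0 + (\<Sum>i\<le>j. of_nat (j choose Suc i) * a (Suc i))"
    using sum.atMost_Suc_shift[of "\<lambda>i. of_nat (j choose i) * a i" j]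
    by (simp add: binomial_eq_0)
  also have "a 0 + (\<Sum>i\<le>j. of_nat (j choose Suc i) * a (Suc i))
        + (\<Sum>i\<le>j. of_nat (j choose i) * a (Suc i))
      = a 0 + (\<Sum>i\<le>j. of_nat (Suc j choose Suc i) * a (Suc i))"
    by (simp add: sum.distrib[symmetric] algebra_simps)
  also have "\<dots> = (\<Sum>i\<le>Suc j. of_nat (Suc j choose i) * a i)"
    by (simp only: sum.atMost_Suc_shift[of _ j] binomial_n_0 of_nat_1 mult_1_left)
  finally show ?case
    by (simp only: a_def)
qed simp

lemma poly_seq_newton:
  fixes f :: "nat \<Rightarrow> 'a::comm_ring_1"
  assumes "poly_seq d f"
  shows "f j = (\<Sum>i\<le>d. of_nat (j choose i) * (fdiff ^^ i) f 0)"
proof -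
  have "f j = (\<Sum>i\<le>max j d. of_nat (j choose i) * (fdiff ^^ i) f 0)"
    by (subst fdiff_newton) (rule sum.mono_neutral_left, auto simp: binomial_eq_0)
  also have "\<dots> = (\<Sum>i\<le>d. of_nat (j choose i) * (fdiff ^^ i) f 0)"
    by (rule sum.mono_neutral_right) (auto simp: poly_seq_fdiff_vanish[OF assms])
  finally show ?thesis .
qed

definition dist_int :: "real \<Rightarrow> real" where
  "dist_int x = \<bar>x - of_int (round x)\<bar>"

lemma dist_int_le: "dist_int x \<le> \<bar>x - of_int n\<bar>"
  unfolding dist_int_def by (rule round_diff_minimal)

lemma dist_int_0 [simp]: "dist_int 0 = 0"
  by (simp add: dist_int_def)

lemma dist_int_add: "dist_int (x + y) \<le> dist_int x + dist_int y"
proof -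
  have "dist_int (x + y) \<le> \<bar>x + y - of_int (round x + round y)\<bar>"
    by (rule dist_int_le)
  also have "\<dots> \<le> dist_int x + dist_int y"
    unfolding dist_int_def by simp
  finally show ?thesis .
qed

lemma dist_int_minus: "dist_int (- x) = dist_int x"
  using dist_int_le[of "- x" "- round x"] dist_int_le[of x "- round (- x)"]
  unfolding dist_int_def by simp

lemma dist_int_diff: "dist_int (x - y) \<le> dist_int x + dist_int y"
  using dist_int_add[of x "- y"] by (simp add: dist_int_minus)

lemma dist_int_diff_less:
  assumes "B > 0" "\<lfloor>frac a * B\<rfloor> = \<lfloor>frac b * B\<rfloor>"
  shows "dist_int (a - b) < 1 / B"
proof -
  have "\<bar>frac a * B - frac b * B\<bar> < 1"
    using assms(2) by linarith
  then have "\<bar>frac a - frac b\<bar> * B < 1"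
    using assms(1) by (simp add: left_diff_distrib[symmetric] abs_mult)
  then have "\<bar>frac a - frac b\<bar> < 1 / B"
    using assms(1) by (simp add: field_simps)
  moreover have "dist_int (a - b) \<le> \<bar>a - b - of_int (\<lfloor>a\<rfloor> - \<lfloor>b\<rfloor>)\<bar>"
    by (rule dist_int_le)
  ultimately show ?thesis
    by (simp add: frac_def)
qed

lemma pigeonhole_dist_int:
  fixes v :: "nat \<Rightarrow> nat \<Rightarrow> real" and B :: nat
  assumes "B > 0"
  shows "\<exists>i j. i < j \<and> j \<le> B ^ D \<and> (\<forall>c<D. dist_int (v c j - v c i) < 1 / B)"
proof -
  define box where "box t = map (\<lambda>c. \<lfloor>frac (v c t) * B\<rfloor>) [0..<D]" for t
  have "box ` {0..B ^ D} \<subseteq> {xs. set xs \<subseteq> {0..<int B} \<and> length xs = D}"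
    using assms by (auto simp: box_def frac_lt_1 floor_less_iff)
  then have "card (box ` {0..B ^ D}) \<le> card {xs. set xs \<subseteq> {0..<int B} \<and> length xs = D}"
    by (intro card_mono finite_lists_length_eq) simp_all
  also have "\<dots> < card {0..B ^ D}"
    by (simp add: card_lists_length_eq)
  finally have "\<not> inj_on box {0..B ^ D}"
    by (rule pigeonhole)
  then obtain i j where "i < j" "j \<le> B ^ D" "box i = box j"
    unfolding inj_on_def by (metis atLeastAtMost_iff linorder_neqE_nat)
  moreover have "dist_int (v c j - v c i) < 1 / B" if "c < D" for c
    using \<open>box i = box j\<close> that assms
    by (intro dist_int_diff_less) (auto simp: box_def dest: arg_cong[where f = "\<lambda>xs. xs ! c"])
  ultimately show ?thesis by blast
qed

section \<open>Uniform simultaneous recurrence modulo 1\<close>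

definition uniform_return_bound :: "nat \<Rightarrow> nat \<Rightarrow> real \<Rightarrow> nat \<Rightarrow> bool" where
  "uniform_return_bound d D \<epsilon> W \<longleftrightarrow>
     (\<forall>U :: nat \<Rightarrow> nat \<Rightarrow> real. (\<forall>c<D. poly_seq d (U c)) \<longrightarrow>
        (\<exists>q\<in>{1..W}. \<forall>c<D. dist_int (U c q - U c 0) < \<epsilon>))"

lemma uniform_return_bound_pos:
  assumes "uniform_return_bound d D \<epsilon> W"
  shows "1 \<le> W"
proof -
  obtain q where "q \<in> {1..W}"
    using assms[unfolded uniform_return_bound_def, rule_format, of "\<lambda>_ _. 0"] poly_seq_const
    by blast
  then show ?thesis by simp
qed

lemma uniform_return_bound_0: "\<epsilon> > 0 \<Longrightarrow> uniform_return_bound 0 D \<epsilon> 1"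
  unfolding uniform_return_bound_def poly_seq.simps
  by (metis atLeastAtMost_singleton diff_self dist_int_0 singletonI)

text \<open>
  Along a return chain every difference x j - x i is a candidate return time: if U c (x i)
  and U c (x j) are close modulo 1, near-additivity makes U c (x j - x i) close to U c 0.
\<close>

definition return_chain ::
    "nat \<Rightarrow> nat \<Rightarrow> real \<Rightarrow> (nat \<Rightarrow> nat \<Rightarrow> real) \<Rightarrow> nat \<Rightarrow> (nat \<Rightarrow> nat) \<Rightarrow> bool" where
  "return_chain D W \<epsilon> U t x \<longleftrightarrow>
     x 0 = 0 \<and> (\<forall>j\<le>t. x j \<le> j * W) \<and> (\<forall>i j. i < j \<longrightarrow> j \<le> t \<longrightarrow> x i < x j) \<and>
     (\<forall>i j c. i \<le> j \<longrightarrow> j \<le> t \<longrightarrow> c < D \<longrightarrow>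
        dist_int (U c (x j) - U c (x i) - (U c (x j - x i) - U c 0)) \<le> t * \<epsilon>)"

lemma poly_seq_diff_shifts:
  assumes "poly_seq (Suc d) f" "b \<le> a"
  shows "poly_seq d (\<lambda>n. f (a + n) - f (b + n))"
proof -
  have "poly_seq d (\<lambda>n. f (n + (a - b)) - f n)"
    using assms(1) by (rule poly_seq_shift_diff)
  from poly_seq_shift[OF this, of b] show ?thesis
    using assms(2) by (simp add: algebra_simps)
qed

lemma return_chain_mono:
  assumes "return_chain D W \<epsilon> U t x" "i \<le> j" "j \<le> t"
  shows "x i \<le> x j"
  using assms unfolding return_chain_def by (metis le_neq_implies_less less_imp_le order_refl)

lemma return_chain_extend:
  fixes \<epsilon> :: real
  assumes x: "return_chain D W \<epsilon> U t x" and "0 \<le> \<epsilon>" "1 \<le> y" "y \<le> W"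
    and new: "\<forall>i\<le>t. \<forall>c<D.
      dist_int (U c (x t + y) - U c (x i) - (U c (x t + y - x i) - U c 0)) \<le> Suc t * \<epsilon>"
  shows "return_chain D W \<epsilon> U (Suc t) (x(Suc t := x t + y))"
proof -
  define x' where "x' = x(Suc t := x t + y)"
  have "return_chain D W \<epsilon> U (Suc t) x'"
    unfolding return_chain_def
  proof (intro conjI allI impI)
    show "x' 0 = 0"
      using x by (simp add: x'_def return_chain_def)
  next
    fix j assume "j \<le> Suc t"
    then show "x' j \<le> j * W"
      using x \<open>y \<le> W\<close> by (cases "j = Suc t") (auto simp: x'_def return_chain_def)
  next
    fix i j assume "i < j" "j \<le> Suc t"
    then show "x' i < x' j"
      using x \<open>1 \<le> y\<close> return_chain_mono[OF x, of i t]
      by (cases "j = Suc t") (auto simp: x'_def return_chain_def)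
  next
    fix i j c assume "i \<le> j" "j \<le> Suc t" "c < D"
    then consider "j \<le> t" | "j = Suc t" "i \<le> t" | "i = Suc t" "j = Suc t"
      by linarith
    then show "dist_int (U c (x' j) - U c (x' i) - (U c (x' j - x' i) - U c 0)) \<le> Suc t * \<epsilon>"
    proof cases
      case 1
      then have "x' i = x i" "x' j = x j"
        using \<open>i \<le> j\<close> by (auto simp: x'_def)
      moreover have "dist_int (U c (x j) - U c (x i) - (U c (x j - x i) - U c 0)) \<le> t * \<epsilon>"
        using x 1 \<open>i \<le> j\<close> \<open>c < D\<close> unfolding return_chain_def by blast
      moreover have "t * \<epsilon> \<le> Suc t * \<epsilon>"
        using \<open>0 \<le> \<epsilon>\<close> by (intro mult_right_mono) auto
      ultimately show ?thesis
        by simp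
    next
      case 2
      then show ?thesis
        using new \<open>c < D\<close> by (simp add: x'_def)
    next
      case 3
      then show ?thesis
        using \<open>0 \<le> \<epsilon>\<close> by simp
    qed
  qed
  then show ?thesis
    by (simp add: x'_def)
qed

lemma return_chain_Suc:
  assumes ret: "uniform_return_bound d (D * Suc K) \<epsilon> W" and "0 \<le> \<epsilon>"
    and U: "\<forall>c<D. poly_seq (Suc d) (U c)" and "t \<le> K"
    and x: "return_chain D W \<epsilon> U t x"
  shows "\<exists>x'. return_chain D W \<epsilon> U (Suc t) x'"
proof -
  \<comment> \<open>one sequence for each pair (c, i) with c < D and i \<le> K, encoded as c' = c + D * i\<close>
  define V where "V c' y = U (c' mod D) (x t + y) - U (c' mod D) (x t - x (c' div D) + y)" for c' y
  have "poly_seq d (V c')" if "c' < D * Suc K" for c'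
  proof -
    from that have "c' mod D < D"
      by (cases "D = 0") auto
    with U show ?thesis
      unfolding V_def by (intro poly_seq_diff_shifts) auto
  qed
  then have "\<exists>y\<in>{1..W}. \<forall>c'<D * Suc K. dist_int (V c' y - V c' 0) < \<epsilon>"
    using ret unfolding uniform_return_bound_def by blast
  then obtain y where "1 \<le> y" "y \<le> W" and close: "\<forall>c'<D * Suc K. dist_int (V c' y - V c' 0) < \<epsilon>"
    by auto
  have "dist_int (U c (x t + y) - U c (x i) - (U c (x t + y - x i) - U c 0)) \<le> Suc t * \<epsilon>"
    if "i \<le> t" "c < D" for i c
  proof -
    have c': "(c + D * i) mod D = c" "(c + D * i) div D = i" "c + D * i < D * Suc K"
      using that \<open>t \<le> K\<close> by (auto intro: less_le_trans[of _ "D * Suc i"])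
    have old: "dist_int (U c (x t) - U c (x i) - (U c (x t - x i) - U c 0)) \<le> t * \<epsilon>"
      using x that unfolding return_chain_def by blast
    have "U c (x t + y) - U c (x i) - (U c (x t + y - x i) - U c 0)
        = (V (c + D * i) y - V (c + D * i) 0) + (U c (x t) - U c (x i) - (U c (x t - x i) - U c 0))"
      using return_chain_mono[OF x \<open>i \<le> t\<close> order_refl] unfolding V_def c'
      by (simp add: algebra_simps)
    also have "dist_int \<dots> \<le> dist_int (V (c + D * i) y - V (c + D * i) 0) + t * \<epsilon>"
      using dist_int_add[of "V (c + D * i) y - V (c + D * i) 0"
          "U c (x t) - U c (x i) - (U c (x t - x i) - U c 0)"] old by linarith
    also have "\<dots> \<le> Suc t * \<epsilon>"
      using close c'(3) by (simp add: algebra_simps less_imp_le)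
    finally show ?thesis .
  qed
  with return_chain_extend[OF x \<open>0 \<le> \<epsilon>\<close> \<open>1 \<le> y\<close> \<open>y \<le> W\<close>] show ?thesis
    by blast
qed

lemma return_chain_exists:
  assumes "uniform_return_bound d (D * Suc K) \<epsilon> W" "0 \<le> \<epsilon>" "\<forall>c<D. poly_seq (Suc d) (U c)"
  shows "t \<le> K \<Longrightarrow> \<exists>x. return_chain D W \<epsilon> U t x"
proof (induction t)
  case 0
  have "return_chain D W \<epsilon> U 0 (\<lambda>_. 0)"
    by (simp add: return_chain_def)
  then show ?case by blast
next
  case (Suc t)
  then show ?case
    using return_chain_Suc[OF assms] by (meson Suc_leD)
qed

lemma uniform_return_bound_Suc:
  fixes B :: nat and \<epsilon> \<delta> :: real
  assumes ret: "uniform_return_bound d (D * Suc (B ^ D)) \<epsilon> W" and "0 < B" "0 \<le> \<epsilon>"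
    and \<delta>: "1 / B + B ^ D * \<epsilon> \<le> \<delta>"
  shows "uniform_return_bound (Suc d) D \<delta> (B ^ D * W)"
  unfolding uniform_return_bound_def
proof (intro allI impI)
  fix U :: "nat \<Rightarrow> nat \<Rightarrow> real"
  assume "\<forall>c<D. poly_seq (Suc d) (U c)"
  then obtain x where x: "return_chain D W \<epsilon> U (B ^ D) x"
    using return_chain_exists[OF ret \<open>0 \<le> \<epsilon>\<close>] by blast
  obtain i j where ij: "i < j" "j \<le> B ^ D"
    and close: "\<forall>c<D. dist_int (U c (x j) - U c (x i)) < 1 / B"
    using pigeonhole_dist_int[OF \<open>0 < B\<close>, where v = "\<lambda>c t. U c (x t)" and D = D] by blast
  have "x i < x j" "x j \<le> B ^ D * W"
    using x ij unfolding return_chain_def by (auto intro: order_trans[OF _ mult_le_mono1])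
  then have "x j - x i \<in> {1..B ^ D * W}"
    by auto
  moreover have "dist_int (U c (x j - x i) - U c 0) < \<delta>" if "c < D" for c
  proof -
    have "U c (x j - x i) - U c 0
        = (U c (x j) - U c (x i)) - (U c (x j) - U c (x i) - (U c (x j - x i) - U c 0))"
      by simp
    then have "dist_int (U c (x j - x i) - U c 0)
        \<le> dist_int (U c (x j) - U c (x i))
          + dist_int (U c (x j) - U c (x i) - (U c (x j - x i) - U c 0))"
      by (metis dist_int_diff)
    also have "\<dots> < 1 / B + B ^ D * \<epsilon>"
      using close x ij \<open>c < D\<close> unfolding return_chain_def by (intro add_less_le_mono) auto
    finally show ?thesis
      using \<delta> by linarith
  qed
  ultimately show "\<exists>q\<in>{1..B ^ D * W}. \<forall>c<D. dist_int (U c q - U c 0) < \<delta>"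
    by blast
qed

lemma uniform_return_bound_exists: "0 < \<epsilon> \<Longrightarrow> \<exists>W. uniform_return_bound d D \<epsilon> W"
proof (induction d arbitrary: D \<epsilon>)
  case 0
  then show ?case
    using uniform_return_bound_0 by blast
next
  case (Suc d)
  obtain B :: nat where "0 < B" "inverse B < \<epsilon> / 2"
    using ex_inverse_of_nat_less[of "\<epsilon> / 2"] Suc.prems by auto
  define \<epsilon>' where "\<epsilon>' = \<epsilon> / (2 * B ^ D)"
  have "0 < \<epsilon>'"
    using \<open>0 < B\<close> Suc.prems by (simp add: \<epsilon>'_def)
  then obtain W where "uniform_return_bound d (D * Suc (B ^ D)) \<epsilon>' W"
    using Suc.IH by blast
  moreover have "1 / B + B ^ D * \<epsilon>' \<le> \<epsilon>"
    using \<open>0 < B\<close> \<open>inverse B < \<epsilon> / 2\<close> by (simp add: \<epsilon>'_def inverse_eq_divide)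
  ultimately show ?case
    using uniform_return_bound_Suc \<open>0 < B\<close> \<open>0 < \<epsilon>'\<close> by (meson less_imp_le)
qed

section \<open>Integer-valued approximation of dilated polynomials\<close>

lemma poly_seq_poly_dilate:
  fixes P :: "'a::comm_ring_1 poly"
  assumes "degree P \<le> d"
  shows "poly_seq d (\<lambda>n. poly P (of_nat n * r))"
proof -
  have "degree (pcompose P [:0, r:]) \<le> degree P * 1"
    by (rule order_trans[OF degree_pcompose_le]) simp
  with assms have "degree (pcompose P [:0, r:]) \<le> d"
    by simp
  from poly_seq_poly[OF this] show ?thesis
    by (simp add: poly_pcompose mult.commute)
qed

lemma uniform_return_bound_dilations:
  fixes P :: "real poly"
  assumes "uniform_return_bound d d \<epsilon> W" "degree P \<le> d"
  shows "\<exists>q\<in>{1..W}. \<forall>i\<in>{1..d}. dist_int ((fdiff ^^ i) (\<lambda>j. poly P (real q * real j)) 0) < \<epsilon>"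
proof -
  define U where "U c x = (fdiff ^^ Suc c) (\<lambda>j. poly P (real x * real j)) 0" for c x
  have "poly_seq d (U c)" for c
    unfolding U_def by (intro poly_seq_fdiff_param poly_seq_poly_dilate assms(2))
  then obtain q where "q \<in> {1..W}" and q: "\<forall>c<d. dist_int (U c q - U c 0) < \<epsilon>"
    using assms(1) unfolding uniform_return_bound_def by blast
  moreover have "U c 0 = 0" for c
    by (simp add: U_def fdiff_funpow_const del: funpow.simps)
  moreover have "i = Suc (i - 1)" "i - 1 < d" if "i \<in> {1..d}" for i
    using that by auto
  ultimately show ?thesis
    unfolding U_def by (metis diff_zero)
qed

definition binomial_poly :: "nat \<Rightarrow> 'a::field_char_0 poly" where
  "binomial_poly k = smult (inverse (fact k)) (\<Prod>l<k. [:- of_nat l, 1:])"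

lemma poly_binomial_poly: "poly (binomial_poly k) x = x gchoose k"
  by (simp add: binomial_poly_def poly_prod gbinomial_prod_rev atLeast0LessThan field_simps)

lemma degree_binomial_poly: "degree (binomial_poly k :: 'a::field_char_0 poly) \<le> k"
proof -
  have "degree (\<Prod>l<k. [:- of_nat l, 1 :: 'a:]) \<le> k"
    using degree_prod_sum_le[of "{..<k}" "\<lambda>l. [:- of_nat l, 1 :: 'a:]"] by (simp add: o_def)
  then show ?thesis
    by (simp add: binomial_poly_def)
qed

lemma poly_seq_near_integer_valued:
  fixes f :: "nat \<Rightarrow> real"
  assumes "poly_seq d f" and near: "\<forall>i\<in>{1..d}. dist_int ((fdiff ^^ i) f 0) \<le> \<epsilon>"
  shows "\<bar>f j - f 0 - (\<Sum>i\<in>{1..d}. of_nat (j choose i) * of_int (round ((fdiff ^^ i) f 0)))\<bar>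
    \<le> d * 2 ^ j * \<epsilon>"
proof -
  define a where "a i = (fdiff ^^ i) f 0" for i
  have "f j = a 0 + (\<Sum>i\<in>{1..d}. of_nat (j choose i) * a i)"
    using poly_seq_newton[OF assms(1), of j]
    by (simp add: a_def atMost_atLeast0 sum.atLeast_Suc_atMost)
  then have "f j - f 0 - (\<Sum>i\<in>{1..d}. of_nat (j choose i) * of_int (round (a i)))
      = (\<Sum>i\<in>{1..d}. of_nat (j choose i) * (a i - of_int (round (a i))))"
    by (simp add: a_def sum_subtractf algebra_simps)
  also have "\<bar>\<dots>\<bar> \<le> (\<Sum>i\<in>{1..d}. 2 ^ j * \<epsilon>)"
  proof (rule order_trans[OF sum_abs sum_mono])
    fix i assume "i \<in> {1..d}"
    moreover have "real (j choose i) \<le> 2 ^ j"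
      using binomial_le_pow2 of_nat_mono by fastforce
    ultimately show "\<bar>of_nat (j choose i) * (a i - of_int (round (a i)))\<bar> \<le> 2 ^ j * \<epsilon>"
      using near unfolding abs_mult a_def dist_int_def
      by (intro mult_mono) auto
  qed
  finally show ?thesis
    by (simp add: a_def)
qed

lemma dilated_poly_near_integer_valued:
  fixes P :: "real poly"
  assumes "degree P \<le> d" "0 < q"
    and near: "\<forall>i\<in>{1..d}. dist_int ((fdiff ^^ i) (\<lambda>j. poly P (real q * real j)) 0) \<le> \<epsilon>"
  shows "\<exists>R. degree R \<le> d \<and> (\<forall>j. poly R (real q * real j) \<in> \<int>) \<and>
    (\<forall>j. \<bar>poly P (real q * real j) - poly P 0 - poly R (real q * real j)\<bar> \<le> d * 2 ^ j * \<epsilon>)"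
proof -
  define f where "f j = poly P (real q * real j)" for j
  define k where "k i = round ((fdiff ^^ i) f 0)" for i
  define R where
    "R = (\<Sum>i\<in>{1..d}. smult (of_int (k i)) (pcompose (binomial_poly i) [:0, 1 / real q:]))"
  have "degree R \<le> d"
    unfolding R_def using degree_binomial_poly
    by (intro degree_sum_le)
      (auto simp: degree_pcompose
        intro!: order_trans[OF degree_smult_le] order_trans[OF degree_binomial_poly])
  moreover have R: "poly R (real q * real j) = (\<Sum>i\<in>{1..d}. of_nat (j choose i) * of_int (k i))"
    for j
    using \<open>0 < q\<close>
    by (simp add: R_def poly_sum poly_pcompose poly_binomial_poly binomial_gbinomial mult.commute)
  moreover have "poly_seq d f"
    unfolding f_def using poly_seq_poly_dilate[OF assms(1), of "real q"] by (simp add: mult.commute)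
  moreover have "\<forall>i\<in>{1..d}. dist_int ((fdiff ^^ i) f 0) \<le> \<epsilon>"
    using near by (simp add: f_def[abs_def])
  ultimately have "\<bar>f j - f 0 - poly R (real q * real j)\<bar> \<le> d * 2 ^ j * \<epsilon>" for j
    using poly_seq_near_integer_valued by (simp add: k_def)
  with \<open>degree R \<le> d\<close> R show ?thesis
    by (intro exI[of _ R]) (auto simp: f_def)
qed

lemma uniform_return_bound_integer_approx:
  fixes P :: "real poly" and m :: nat
  assumes "0 < m" "uniform_return_bound d d (1 / (5 * m * d * 2 ^ J)) W" "degree P \<le> d"
  shows "\<exists>q\<in>{1..W}. \<exists>R. degree R \<le> d \<and> (\<forall>j. poly R (real q * real j) \<in> \<int>) \<and>
    (\<forall>j\<le>J. \<bar>poly P (real q * real j) - poly P 0 - m * poly R (real q * real j)\<bar> \<le> 1 / 5)"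
proof -
  define \<epsilon> :: real where "\<epsilon> = 1 / (5 * m * d * 2 ^ J)"
  define Q where "Q = smult (1 / m) P"
  have "degree Q \<le> d"
    using \<open>degree P \<le> d\<close> by (simp add: Q_def)
  with assms(2) obtain q where q: "q \<in> {1..W}"
    and "\<forall>i\<in>{1..d}. dist_int ((fdiff ^^ i) (\<lambda>j. poly Q (real q * real j)) 0) < \<epsilon>"
    unfolding \<epsilon>_def by (metis uniform_return_bound_dilations)
  then obtain R where "degree R \<le> d" "\<forall>j. poly R (real q * real j) \<in> \<int>"
    and R: "\<forall>j. \<bar>poly Q (real q * real j) - poly Q 0 - poly R (real q * real j)\<bar> \<le> d * 2 ^ j * \<epsilon>"
    using dilated_poly_near_integer_valued[OF \<open>degree Q \<le> d\<close>, of q \<epsilon>] by (auto simp: less_imp_le)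
  moreover have "\<bar>poly P (real q * real j) - poly P 0 - m * poly R (real q * real j)\<bar> \<le> 1 / 5"
    if "j \<le> J" for j
  proof -
    have "poly P (real q * real j) - poly P 0 - m * poly R (real q * real j)
        = m * (poly Q (real q * real j) - poly Q 0 - poly R (real q * real j))"
      using \<open>0 < m\<close> by (simp add: Q_def field_simps)
    then have "\<bar>poly P (real q * real j) - poly P 0 - m * poly R (real q * real j)\<bar>
        = m * \<bar>poly Q (real q * real j) - poly Q 0 - poly R (real q * real j)\<bar>"
      by (simp add: abs_mult)
    also have "\<dots> \<le> m * (d * 2 ^ J * \<epsilon>)"
    proof -
      have "real d * 2 ^ j * \<epsilon> \<le> real d * 2 ^ J * \<epsilon>"
        using \<open>j \<le> J\<close> by (intro mult_right_mono mult_left_mono) (simp_all add: \<epsilon>_def)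
      with R show ?thesis
        by (intro mult_left_mono) (auto intro: order_trans)
    qed
    also have "\<dots> \<le> 1 / 5"
      by (cases "d = 0") (simp_all add: \<epsilon>_def)
    finally show ?thesis .
  qed
  ultimately show ?thesis
    using q by blast
qed

section \<open>Functions with a nonvanishing higher derivative\<close>

lemma deriv_chain_on_continuous:
  assumes "deriv_chain_on k S D"
  shows "continuous_on S (D 0)"
proof (cases k)
  case 0
  with assms show ?thesis
    by (simp add: deriv_chain_on_def)
next
  case (Suc k')
  with assms have "(D 0 has_real_derivative D 1 x) (at x within S)" if "x \<in> S" for x
    using that unfolding deriv_chain_on_def by auto
  then show ?thesis
    by (rule DERIV_continuous_on)
qed

lemma Rolle_has_real_derivative_within:
  fixes f f' :: "real \<Rightarrow> real"
  assumes der: "\<forall>x\<in>{a..b}. (f has_real_derivative f' x) (at x within {a..b})"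
    and "a \<le> u" "u < v" "v \<le> b" "f u = f v"
  shows "\<exists>z. u < z \<and> z < v \<and> f' z = 0"
proof -
  have "\<exists>z. u < z \<and> z < v \<and> (\<lambda>h. f' z * h) = (\<lambda>h. 0)"
  proof (rule Rolle_deriv)
    show "continuous_on {u..v} f"
      using DERIV_continuous_on[of "{a..b}" f f'] der assms(2,4)
      by (auto intro: continuous_on_subset)
  next
    fix x assume "u < x" "x < v"
    with assms(2,4) have "a < x" "x < b"
      by auto
    with der have "(f has_real_derivative f' x) (at x within {a..b})"
      by auto
    with \<open>a < x\<close> \<open>x < b\<close> have "(f has_real_derivative f' x) (at x)"
      by (simp add: at_within_Icc_at)
    then show "(f has_derivative (\<lambda>h. f' x * h)) (at x)"
      by (simp add: has_field_derivative_def)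
  qed (use assms in auto)
  then show ?thesis
    by (metis mult_cancel_left1)
qed

lemma deriv_chain_on_too_many_zeros:
  fixes E :: "nat \<Rightarrow> real \<Rightarrow> real" and t :: "nat \<Rightarrow> real"
  assumes "deriv_chain_on k {a..b} E" "\<forall>s\<in>{a..b}. E k s \<noteq> 0"
    and "\<forall>i<k. t i < t (Suc i)" "\<forall>i\<le>k. t i \<in> {a..b}" "\<forall>i\<le>k. E 0 (t i) = 0"
  shows False
  using assms
proof (induction k arbitrary: E t)
  case 0
  then show ?case by auto
next
  case (Suc k)
  have der: "\<forall>x\<in>{a..b}. (E 0 has_real_derivative E 1 x) (at x within {a..b})"
    using Suc.prems(1) unfolding deriv_chain_on_def by auto
  have "\<exists>z. t i < z \<and> z < t (Suc i) \<and> E 1 z = 0" if "i \<le> k" for i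
    by (rule Rolle_has_real_derivative_within[OF der]) (use Suc.prems(3-5) that in auto)
  then obtain z where z: "\<forall>i\<le>k. t i < z i \<and> z i < t (Suc i) \<and> E 1 (z i) = 0"
    by metis
  show False
  proof (rule Suc.IH[of "\<lambda>j. E (Suc j)" z])
    show "deriv_chain_on k {a..b} (\<lambda>j. E (Suc j))"
      using Suc.prems(1) unfolding deriv_chain_on_def by auto
    show "\<forall>i<k. z i < z (Suc i)"
      using z by (metis Suc_leI less_imp_le_nat less_trans)
    show "\<forall>i\<le>k. z i \<in> {a..b}"
      using z Suc.prems(4) by (metis atLeastAtMost_iff le_SucI less_imp_le Suc_le_mono order_trans)
  qed (use Suc.prems z in auto)
qed

lemma deriv_chain_on_add_poly:
  fixes p :: "real poly"
  assumes "deriv_chain_on k S D"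
  shows "deriv_chain_on k S (\<lambda>j s. D j s + poly ((pderiv ^^ j) p) s)"
  unfolding deriv_chain_on_def
proof (intro conjI ballI allI impI)
  fix j s assume "j < k" "s \<in> S"
  with assms have "(D j has_real_derivative D (Suc j) s) (at s within S)"
    unfolding deriv_chain_on_def by blast
  then show "((\<lambda>s. D j s + poly ((pderiv ^^ j) p) s) has_real_derivative
      D (Suc j) s + poly ((pderiv ^^ Suc j) p) s) (at s within S)"
    by (simp add: DERIV_add has_field_derivative_at_within[OF poly_DERIV])
next
  have "continuous_on S (D k)"
    using assms unfolding deriv_chain_on_def by blast
  then show "continuous_on S (\<lambda>s. D k s + poly ((pderiv ^^ k) p) s)"
    by (intro continuous_on_add continuous_on_poly continuous_on_id)
qed

lemma higher_pderiv_eq_0: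
  fixes p :: "'a::{idom, ring_char_0} poly"
  assumes "degree p < k"
  shows "(pderiv ^^ k) p = 0"
proof -
  obtain k' where "k = Suc k'"
    using assms less_imp_Suc_add by blast
  moreover have "degree ((pderiv ^^ k') p) = 0"
    using assms \<open>k = Suc k'\<close> by (simp add: degree_higher_pderiv)
  ultimately show ?thesis
    by (simp add: pderiv_eq_0_iff)
qed

section \<open>The paperfolding block\<close>

text \<open>The complement of the regular paperfolding sequence.\<close>

function paperfolding :: "nat \<Rightarrow> nat" where
  "paperfolding n =
    (if n = 0 then 0 else if even n then paperfolding (n div 2) else if n mod 4 = 3 then 1 else 0)"
  by auto
termination
  by (relation "Wellfounded.measure id") auto

declare paperfolding.simps [simp del]

lemma paperfolding_range: "paperfolding n \<in> {0, 1}"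
  by (induction n rule: paperfolding.induct) (subst paperfolding.simps, auto)

lemma paperfolding_double: "n \<noteq> 0 \<Longrightarrow> paperfolding (2 * n) = paperfolding n"
  by (subst paperfolding.simps) simp

lemma paperfolding_odd_multiples:
  "1 \<le> q \<Longrightarrow> paperfolding (q * (4 * i + 1)) \<noteq> paperfolding (q * (4 * i + 3))"
proof (induction q rule: less_induct)
  case (less q)
  show ?case
  proof (cases "even q")
    case True
    then obtain r where "q = 2 * r"
      by blast
    with less.prems have "1 \<le> r" "r < q"
      by simp_all
    have scale: "paperfolding (q * k) = paperfolding (r * k)" if "k \<noteq> 0" for k
      unfolding \<open>q = 2 * r\<close> mult.assoc using \<open>1 \<le> r\<close> that by (intro paperfolding_double) simp
    have "paperfolding (q * (4 * i + 1)) = paperfolding (r * (4 * i + 1))"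
      "paperfolding (q * (4 * i + 3)) = paperfolding (r * (4 * i + 3))"
      by (rule scale, simp)+
    moreover have "paperfolding (r * (4 * i + 1)) \<noteq> paperfolding (r * (4 * i + 3))"
      using less.IH \<open>r < q\<close> \<open>1 \<le> r\<close> by blast
    ultimately show ?thesis
      by simp
  next
    case False
    have e: "q * (4 * i + 1) = q + 4 * (q * i)" "q * (4 * i + 3) = 3 * q + 4 * (q * i)"
      by (simp_all add: algebra_simps)
    have "(q * (4 * i + 1)) mod 4 = q mod 4" "(q * (4 * i + 3)) mod 4 = (3 * q) mod 4"
      unfolding e by (simp_all only: mod_mult_self2)
    moreover have "q mod 4 = 3 \<longleftrightarrow> (3 * q) mod 4 \<noteq> 3"
      using False by presburger
    ultimately show ?thesis
      using False less.prems by (subst (1 2) paperfolding.simps) auto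
  qed
qed

lemma floor_change_imp_zero:
  fixes f :: "real \<Rightarrow> real"
  assumes "a \<le> b" "continuous_on {a..b} f" "f a \<in> {-1..<1}" "f b \<in> {-1..<1}" "\<lfloor>f a\<rfloor> \<noteq> \<lfloor>f b\<rfloor>"
  shows "\<exists>t\<in>{a..b}. f t = 0"
proof -
  have "\<lfloor>f a\<rfloor> = (if f a < 0 then -1 else 0)" "\<lfloor>f b\<rfloor> = (if f b < 0 then -1 else 0)"
    using assms(3,4) by (auto simp: floor_eq_iff)
  with assms(5) have "f a \<le> 0 \<and> 0 \<le> f b \<or> f b \<le> 0 \<and> 0 \<le> f a"
    by (auto split: if_splits)
  then show ?thesis
    using IVT'[of f a 0 b] IVT2'[of f b 0 a] assms(1,2) by (auto; meson atLeastAtMost_iff)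
qed

lemma paperfolding_pattern_zeros:
  fixes \<Phi> :: "real \<Rightarrow> real" and c :: int
  assumes "1 \<le> q" "2 \<le> m" "continuous_on {real q..real (q * (4 * k + 3))} \<Phi>"
    and pattern: "\<forall>j\<in>{1..4 * k + 3}. \<Phi> (real (q * j)) \<in> {-1..<1} \<and>
      [\<lfloor>\<Phi> (real (q * j))\<rfloor> + c = int (paperfolding (q * j))] (mod int m)"
  shows "\<exists>t. \<forall>i\<le>k. t i \<in> {real (q * (4 * i + 1))..real (q * (4 * i + 3))} \<and> \<Phi> (t i) = 0"
proof -
  have "\<exists>t\<in>{real (q * (4 * i + 1))..real (q * (4 * i + 3))}. \<Phi> t = 0" if "i \<le> k" for i
  proof (rule floor_change_imp_zero)
    let ?j1 = "4 * i + 1" and ?j3 = "4 * i + 3"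
    have j: "?j1 \<in> {1..4 * k + 3}" "?j3 \<in> {1..4 * k + 3}"
      using that by auto
    show "real (q * ?j1) \<le> real (q * ?j3)"
      by (intro of_nat_mono mult_le_mono2) simp
    have "{real (q * ?j1)..real (q * ?j3)} \<subseteq> {real q..real (q * (4 * k + 3))}"
      using that by (auto simp del: of_nat_mult of_nat_add
          intro: order_trans[OF _ of_nat_mono[OF mult_le_mono2]])
    with assms(3) show "continuous_on {real (q * ?j1)..real (q * ?j3)} \<Phi>"
      by (rule continuous_on_subset)
    show "\<Phi> (real (q * ?j1)) \<in> {-1..<1}" "\<Phi> (real (q * ?j3)) \<in> {-1..<1}"
      using pattern j by blast+
    show "\<lfloor>\<Phi> (real (q * ?j1))\<rfloor> \<noteq> \<lfloor>\<Phi> (real (q * ?j3))\<rfloor>"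
    proof
      assume "\<lfloor>\<Phi> (real (q * ?j1))\<rfloor> = \<lfloor>\<Phi> (real (q * ?j3))\<rfloor>"
      moreover have "[\<lfloor>\<Phi> (real (q * ?j1))\<rfloor> + c = int (paperfolding (q * ?j1))] (mod int m)"
        "[\<lfloor>\<Phi> (real (q * ?j3))\<rfloor> + c = int (paperfolding (q * ?j3))] (mod int m)"
        using pattern j by blast+
      ultimately have "[paperfolding (q * ?j1) = paperfolding (q * ?j3)] (mod m)"
        unfolding cong_int_iff[symmetric] by (metis cong_sym cong_trans)
      then have "paperfolding (q * ?j1) = paperfolding (q * ?j3)"
        using \<open>2 \<le> m\<close> paperfolding_range[of "q * ?j1"] paperfolding_range[of "q * ?j3"]
        by (intro cong_less_imp_eq_nat) auto
      with paperfolding_odd_multiples \<open>1 \<le> q\<close> show False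
        by blast
    qed
  qed
  then show ?thesis
    by metis
qed

lemma paperfolding_pattern_impossible:
  fixes G :: "real poly" and D :: "nat \<Rightarrow> real \<Rightarrow> real" and c :: int
  assumes chain: "deriv_chain_on (d + 1) {1..real N} D"
    and nz: "\<forall>t\<in>{1..real N}. D (d + 1) t \<noteq> 0"
    and "degree G \<le> d" "1 \<le> q" "q * (4 * d + 7) \<le> N" "2 \<le> m"
    and pattern: "\<forall>j\<in>{1..4 * d + 7}. poly G (real (q * j)) + D 0 (real (q * j)) \<in> {-1..<1} \<and>
      [\<lfloor>poly G (real (q * j)) + D 0 (real (q * j))\<rfloor> + c = int (paperfolding (q * j))] (mod int m)"
  shows False
proof -
  define \<Phi> where "\<Phi> x = poly G x + D 0 x" for x
  have "real 1 \<le> real q" "real (q * (4 * d + 7)) \<le> real N"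
    by (rule of_nat_mono, fact)+
  then have range: "{real q..real (q * (4 * d + 7))} \<subseteq> {1..real N}"
    by (auto simp del: of_nat_mult of_nat_add)
  have "continuous_on {1..real N} (D 0)"
    using chain by (rule deriv_chain_on_continuous)
  then have "continuous_on {real q..real (q * (4 * d + 7))} \<Phi>"
    unfolding \<Phi>_def
    by (intro continuous_on_add continuous_on_poly continuous_on_id
        continuous_on_subset[OF _ range])
  moreover have "\<forall>j\<in>{1..4 * d + 7}. \<Phi> (real (q * j)) \<in> {-1..<1} \<and>
      [\<lfloor>\<Phi> (real (q * j))\<rfloor> + c = int (paperfolding (q * j))] (mod int m)"
    using pattern unfolding \<Phi>_def .
  moreover have k: "4 * (d + 1) + 3 = 4 * d + 7"
    by simp
  ultimately obtain t
    where t: "\<forall>i\<le>d + 1. t i \<in> {real (q * (4 * i + 1))..real (q * (4 * i + 3))} \<and> \<Phi> (t i) = 0"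
    using paperfolding_pattern_zeros[OF \<open>1 \<le> q\<close> \<open>2 \<le> m\<close>, where k = "d + 1", unfolded k] by blast
  show False
  proof (rule deriv_chain_on_too_many_zeros)
    show "deriv_chain_on (d + 1) {1..real N} (\<lambda>j s. D j s + poly ((pderiv ^^ j) G) s)"
      using chain by (rule deriv_chain_on_add_poly)
    show "\<forall>s\<in>{1..real N}. D (d + 1) s + poly ((pderiv ^^ (d + 1)) G) s \<noteq> 0"
      using nz higher_pderiv_eq_0[of G "d + 1"] \<open>degree G \<le> d\<close> by simp
    show "\<forall>i<d + 1. t i < t (Suc i)"
    proof (intro allI impI)
      fix i assume "i < d + 1"
      have "q * (4 * i + 3) < q * (4 * Suc i + 1)"
        using \<open>1 \<le> q\<close> by simp
      then show "t i < t (Suc i)"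
        using t \<open>i < d + 1\<close> by (smt (verit) Suc_leI atLeastAtMost_iff less_imp_le of_nat_less_iff)
    qed
    have "{real (q * (4 * i + 1))..real (q * (4 * i + 3))} \<subseteq> {real q..real (q * (4 * d + 7))}"
      if "i \<le> d + 1" for i
      using that by (auto simp del: of_nat_mult of_nat_add
          intro: order_trans[OF _ of_nat_mono[OF mult_le_mono2]])
    with t range show "\<forall>i\<le>d + 1. t i \<in> {1..real N}"
      by blast
    show "\<forall>i\<le>d + 1. D 0 (t i) + poly ((pderiv ^^ 0) G) (t i) = 0"
      using t by (simp add: \<Phi>_def add.commute)
  qed
qed

lemma floor_shift_near:
  fixes y y\<^sub>0 e :: real and k :: int
  assumes "\<bar>y - y\<^sub>0 - of_int k\<bar> \<le> 1 / 5" "\<bar>e\<bar> \<le> 1 / 20"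
  defines "c \<equiv> \<lfloor>y\<^sub>0 - 1 / 4\<rfloor> + 1"
  shows "y - of_int k - of_int c + e \<in> {-1..<1}"
    and "\<lfloor>y + e\<rfloor> = \<lfloor>y - of_int k - of_int c + e\<rfloor> + (c + k)"
proof -
  have "of_int c - 1 \<le> y\<^sub>0 - 1 / 4" "y\<^sub>0 - 1 / 4 < of_int c"
    unfolding c_def by linarith+
  with assms(1,2) show "y - of_int k - of_int c + e \<in> {-1..<1}"
    unfolding abs_le_iff by auto
  have "y + e = (y - of_int k - of_int c + e) + of_int (c + k)"
    by simp
  then show "\<lfloor>y + e\<rfloor> = \<lfloor>y - of_int k - of_int c + e\<rfloor> + (c + k)"
    by (simp only: floor_add_int)
qed

lemma paperfolding_not_floor_cong:
  fixes P :: "real poly" and \<eta> :: "real \<Rightarrow> real" and D :: "nat \<Rightarrow> real \<Rightarrow> real" and m :: nat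
  assumes "2 \<le> m" and W: "uniform_return_bound d d (1 / (5 * m * d * 2 ^ (4 * d + 7))) W"
    and "W * (4 * d + 7) \<le> N" "degree P \<le> d" "D 0 = \<eta>"
    and chain: "deriv_chain_on (d + 1) {1..real N} D"
    and small: "\<forall>t\<in>{1..real N}. \<bar>\<eta> t\<bar> \<le> 1/20 \<and> D (d + 1) t \<noteq> 0"
  shows "\<exists>n\<in>{1..N}. \<not> [\<lfloor>poly P (real n) + \<eta> (real n)\<rfloor> = int (paperfolding n)] (mod int m)"
proof (rule ccontr)
  assume "\<not> ?thesis"
  then have cong: "[\<lfloor>poly P (real n) + \<eta> (real n)\<rfloor> = int (paperfolding n)] (mod int m)"
    if "n \<in> {1..N}" for n
    using that by blast
  obtain q R where q: "q \<in> {1..W}" and "degree R \<le> d" and R_int: "\<forall>j. poly R (real q * real j) \<in> \<int>"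
    and R: "\<forall>j\<le>4 * d + 7.
      \<bar>poly P (real q * real j) - poly P 0 - m * poly R (real q * real j)\<bar> \<le> 1 / 5"
    using uniform_return_bound_integer_approx[OF _ W \<open>degree P \<le> d\<close>] \<open>2 \<le> m\<close> by auto
  define c where "c = \<lfloor>poly P 0 - 1 / 4\<rfloor> + 1"
  define G where "G = P - smult (real m) R - [:of_int c:]"
  have "degree G \<le> d"
    unfolding G_def using \<open>degree P \<le> d\<close> \<open>degree R \<le> d\<close>
    by (auto intro!: degree_diff_le order_trans[OF degree_smult_le])
  have "q * (4 * d + 7) \<le> N"
    using q \<open>W * (4 * d + 7) \<le> N\<close> by (meson atLeastAtMost_iff le_trans mult_le_mono1)
  have "\<forall>j\<in>{1..4 * d + 7}. poly G (real (q * j)) + D 0 (real (q * j)) \<in> {-1..<1} \<and>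
      [\<lfloor>poly G (real (q * j)) + D 0 (real (q * j))\<rfloor> + c = int (paperfolding (q * j))] (mod int m)"
  proof
    fix j assume j: "j \<in> {1..4 * d + 7}"
    then have "q * j \<in> {1..N}"
      using q \<open>q * (4 * d + 7) \<le> N\<close> by (auto intro: le_trans[OF mult_le_mono2])
    moreover have "real n \<in> {1..real N}" if "n \<in> {1..N}" for n
      using that by simp
    ultimately have "\<bar>\<eta> (real (q * j))\<bar> \<le> 1 / 20"
      using small by blast
    then have "\<bar>\<eta> (real q * real j)\<bar> \<le> 1 / 20"
      by simp
    obtain K where K: "poly R (real q * real j) = of_int K"
      using R_int by (auto elim: Ints_cases)
    have "\<bar>poly P (real q * real j) - poly P 0 - of_int (m * K)\<bar> \<le> 1 / 5"
      using R j K by auto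
    note shift = floor_shift_near[OF this \<open>\<bar>\<eta> (real q * real j)\<bar> \<le> 1 / 20\<close>, folded c_def]
    have "poly G (real q * real j) + D 0 (real q * real j)
        = poly P (real q * real j) - of_int (m * K) - of_int c + \<eta> (real q * real j)"
      by (simp add: G_def K \<open>D 0 = \<eta>\<close>)
    with shift cong[OF \<open>q * j \<in> {1..N}\<close>]
    show "poly G (real (q * j)) + D 0 (real (q * j)) \<in> {-1..<1} \<and>
      [\<lfloor>poly G (real (q * j)) + D 0 (real (q * j))\<rfloor> + c = int (paperfolding (q * j))] (mod int m)"
      by (simp add: cong_def flip: add.assoc)
  qed
  moreover have "\<forall>t\<in>{1..real N}. D (d + 1) t \<noteq> 0" "1 \<le> q"
    using small q by auto
  ultimately show False
    using paperfolding_pattern_impossible chain \<open>degree G \<le> d\<close> \<open>q * (4 * d + 7) \<le> N\<close> \<open>2 \<le> m\<close>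
    by blast
qed

theorem theorem7:
  fixes m d :: nat
  assumes "m \<ge> 2" and "d \<ge> 1"
  shows "\<exists>N::nat. N \<ge> 1 \<and> (\<exists>b :: nat \<Rightarrow> nat. (\<forall>n\<in>{1..N}. b n \<in> {0, 1}) \<and>
     (\<forall>(P :: real poly) (\<eta> :: real \<Rightarrow> real) (D :: nat \<Rightarrow> real \<Rightarrow> real).
        degree P = d \<and> D 0 = \<eta> \<and> deriv_chain_on (d + 1) {1..real N} D \<and>
        (\<forall>t\<in>{1..real N}. \<bar>\<eta> t\<bar> \<le> 1/20 \<and> D (d + 1) t \<noteq> 0)
        \<longrightarrow> (\<exists>n\<in>{1..N}. \<not> [\<lfloor>poly P (real n) + \<eta> (real n)\<rfloor> = int (b n)] (mod int m))))"
proof -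
  have "(0 :: real) < 1 / (5 * m * d * 2 ^ (4 * d + 7))"
    using assms by simp
  then obtain W where W: "uniform_return_bound d d (1 / (5 * m * d * 2 ^ (4 * d + 7))) W"
    using uniform_return_bound_exists by blast
  define N where "N = W * (4 * d + 7)"
  have "1 \<le> N"
    using uniform_return_bound_pos[OF W] by (simp add: N_def)
  moreover have "\<forall>n\<in>{1..N}. paperfolding n \<in> {0, 1}"
    using paperfolding_range by blast
  ultimately show ?thesis
    using paperfolding_not_floor_cong[OF \<open>m \<ge> 2\<close> W, of N] unfolding N_def
    by (intro exI[of _ N] conjI exI[of _ paperfolding]) (auto simp: N_def)
qed

end
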